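(* Let $p,q$ be coprime integers with $2\le p<q$ and let $f(z_0,z_1)=z_0^p+z_1^q+\sum_{iq+jp>pq}a_{i,j}z_0^iz_1^j\in\mathbb{C}\{z_0,z_1\}$ (an irreducible plane curve singularity with single Puiseux pair $(p,q)$). Then: (a) $\Phi_f\!\left(\frac1p+\frac1q\right)>0$ unless $p=2$ and $q\in\{3,5\}$; moreover $\Phi_f\!\left(\frac1p+\frac1q\right)\to0$ as $p\to\infty$. (b) $\Phi_f\!\left(1-\frac1{pq}\right)<0$, and $\Phi_f\!\left(1-\frac1{pq}\right)\to0$ as $p\to\infty$.
   Context: For a plane curve germ $f$ (so $n=1$) with isolated singularity, Milnor number $\mu$ and spectral numbers $\alpha_1,\dots,\alpha_\mu\in(0,2)$ (Steenbrink's spectrum), define for $r\in[0,1]$ \[ \Phi_f(r)=\int_0^r N_2(s)\,ds-\frac1\mu\#\{i\mid \alpha_i\le r\}=\frac{r^2}{2}-\frac1\mu\#\{i\mid\alpha_i\le r\}, \] where $N_2(s)=s$ for $s\in[0,1]$ is the density of the sum of two independent uniform $[0,1]$ variables. For $f$ as in the claim, $\mu=(p-1)(q-1)$ and the spectral numbers are $\frac{i+1}{p}+\frac{j+1}{q}$ for $0\le i\le p-2$, $0\le j\le q-2$. *)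

theory Defs
  imports Complex_Main "HOL-Library.Multiset"
begin

text \<open>Steenbrink spectrum of the plane curve germ with single Puiseux pair (p,q),
  as a multiset of spectral numbers (i+1)/p + (j+1)/q, 0 <= i <= p-2, 0 <= j <= q-2.\<close>
definition puiseux_spectrum :: "nat \<Rightarrow> nat \<Rightarrow> real multiset" where
  "puiseux_spectrum p q =
     image_mset (\<lambda>(i, j). real (i + 1) / real p + real (j + 1) / real q)
       (mset_set ({0..<p - 1} \<times> {0..<q - 1}))"

text \<open>Phi for a curve (n = 1) with spectrum given as a multiset (size = Milnor number):
  Phi(r) = r^2/2 - #{i. alpha_i <= r} / mu.\<close>
definition Phi_spec :: "real multiset \<Rightarrow> real \<Rightarrow> real" where
  "Phi_spec alphas r = r ^ 2 / 2 - real (size (filter_mset (\<lambda>a. a \<le> r) alphas)) / real (size alphas)"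

end

theory Submission
  imports Defs
begin

(* Every spectral number has the form k/(pq) with k = (i+1)q + (j+1)p; the smallest one, 1/p + 1/q,
   occurs once. Hence Phi_f(r) = r^2/2 - 1/mu at r = 1/p + 1/q, whose sign is that of
   (p+q)^2 (p-1)(q-1) - 2 p^2 q^2: positive for p >= 3, q >= 5 and for p = 2, q >= 7, while the
   remaining coprime pairs are checked by hand. At r = 1 - 1/(pq) the counted spectral numbers are
   exactly those below 1. The reflection (i, j) |-> (p-2-i, q-2-j) maps the spectrum onto itself by
   a |-> 2 - a, and coprimality keeps 1 out of it, so exactly half of the spectrum lies below 1 and
   Phi_f(r) = r^2/2 - 1/2 < 0. Both values are O(1/p) uniformly in q. *)

lemma size_puiseux_spectrum: "size (puiseux_spectrum p q) = (p - 1) * (q - 1)"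
  by (simp add: puiseux_spectrum_def)

lemma size_filter_puiseux_spectrum:
  "size (filter_mset P (puiseux_spectrum p q)) =
   card {(i, j) \<in> {0..<p - 1} \<times> {0..<q - 1}. P (real (i + 1) / real p + real (j + 1) / real q)}"
  unfolding puiseux_spectrum_def
  by (simp add: image_mset_filter_mset_swap[symmetric] filter_mset_mset_set case_prod_unfold)
    (auto intro!: arg_cong[where f = card])

lemma puiseux_spectrum_reflect:
  "image_mset (\<lambda>a. 2 - a) (puiseux_spectrum p q) = puiseux_spectrum p q"
proof -
  define A where "A = {0..<p - 1} \<times> {0..<q - 1}"
  define g where "g = (\<lambda>(i, j). real (i + 1) / real p + real (j + 1) / real q)"
  define \<sigma> where "\<sigma> = (\<lambda>(i, j). (p - 2 - i, q - 2 - j))"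
  have reflect: "2 - g x = g (\<sigma> x)" if "x \<in> A" for x
  proof -
    obtain i j where x: "x = (i, j)" "i < p - 1" "j < q - 1"
      using \<open>x \<in> A\<close> by (auto simp: A_def)
    have "real (p - 2 - i + 1) = real p - real (i + 1)" "real (q - 2 - j + 1) = real q - real (j + 1)"
      using x by (auto simp: of_nat_diff)
    moreover have "real p > 0" "real q > 0" using x by auto
    ultimately show ?thesis by (simp add: x g_def \<sigma>_def field_simps)
  qed
  have involution: "\<sigma> x \<in> A \<and> \<sigma> (\<sigma> x) = x" if "x \<in> A" for x
    using that by (auto simp: A_def \<sigma>_def)
  then have "inj_on \<sigma> A" "\<sigma> ` A = A"
    by (metis inj_on_inverseI, force intro: image_eqI)
  then have "image_mset (g \<circ> \<sigma>) (mset_set A) = image_mset g (mset_set A)"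
    by (simp flip: image_mset.comp add: image_mset_mset_set)
  moreover have "image_mset ((\<lambda>a. 2 - a) \<circ> g) (mset_set A) = image_mset (g \<circ> \<sigma>) (mset_set A)"
    using reflect A_def by (intro image_mset_cong) auto
  moreover have "puiseux_spectrum p q = image_mset g (mset_set A)"
    by (simp add: puiseux_spectrum_def A_def g_def)
  ultimately show ?thesis
    by (simp flip: image_mset.comp)
qed

lemma in_puiseux_spectrum_iff:
  "a \<in># puiseux_spectrum p q \<longleftrightarrow>
   (\<exists>i < p - 1. \<exists>j < q - 1. a = real (i + 1) / real p + real (j + 1) / real q)"
  by (force simp: puiseux_spectrum_def)

lemma one_not_in_puiseux_spectrum:
  assumes "coprime p q"
  shows "1 \<notin># puiseux_spectrum p q"
proof
  assume "1 \<in># puiseux_spectrum p q"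
  then obtain i j where ij: "i < p - 1" "1 = real (i + 1) / real p + real (j + 1) / real q"
    by (auto simp: in_puiseux_spectrum_iff)
  then have "real p > 0" "real q > 0"
    by (auto simp: divide_simps split: if_splits)
  with ij have "(i + 1) * q + (j + 1) * p = p * q"
    by (simp add: field_simps flip: of_nat_mult of_nat_add)
  then have "p dvd (i + 1) * q"
    by (metis dvd_add_times_triv_right_iff dvd_triv_left)
  with assms have "p dvd i + 1"
    using coprime_dvd_mult_left_iff by blast
  with \<open>i < p - 1\<close> show False
    by (auto dest: dvd_imp_le)
qed

lemma size_filter_below_center:
  fixes M :: "real multiset"
  assumes symmetric: "image_mset (\<lambda>a. 2 * c - a) M = M" and "c \<notin># M"
  shows "2 * size (filter_mset (\<lambda>a. a < c) M) = size M"
proof -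
  have "filter_mset (\<lambda>a. a < c) M = image_mset (\<lambda>a. 2 * c - a) (filter_mset (\<lambda>a. c < a) M)"
    by (subst (1) symmetric[symmetric]) (simp flip: image_mset_filter_mset_swap)
  then have "size (filter_mset (\<lambda>a. a < c) M) = size (filter_mset (\<lambda>a. c < a) M)"
    by simp
  moreover have "filter_mset (\<lambda>a. \<not> a < c) M = filter_mset (\<lambda>a. c < a) M"
    using \<open>c \<notin># M\<close> by (intro filter_mset_cong) (auto simp: not_less order_le_less)
  then have "size M = size (filter_mset (\<lambda>a. a < c) M) + size (filter_mset (\<lambda>a. c < a) M)"
    by (metis multiset_partition size_union)
  ultimately show ?thesis
    by simp
qed

lemma Phi_puiseux_spectrum_at_minimum:
  assumes "2 \<le> p" "2 \<le> q"
  shows "Phi_spec (puiseux_spectrum p q) (1 / real p + 1 / real q) =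
         (1 / real p + 1 / real q)\<^sup>2 / 2 - 1 / ((real p - 1) * (real q - 1))"
proof -
  have "real (i + 1) / real p + real (j + 1) / real q \<le> 1 / real p + 1 / real q \<longleftrightarrow> i = 0 \<and> j = 0"
    for i j :: nat
  proof -
    have "real (i + 1) / real p + real (j + 1) / real q = 1 / real p + 1 / real q + (real i / real p + real j / real q)"
      by (simp add: add_divide_distrib)
    moreover have "real i / real p \<ge> 0" "real j / real q \<ge> 0"
      by simp_all
    ultimately have "real (i + 1) / real p + real (j + 1) / real q \<le> 1 / real p + 1 / real q \<longleftrightarrow>
                     real i / real p = 0 \<and> real j / real q = 0"
      by linarith
    then show ?thesis
      using assms by simp
  qed
  then have "{(i, j) \<in> {0..<p - 1} \<times> {0..<q - 1}.
               real (i + 1) / real p + real (j + 1) / real q \<le> 1 / real p + 1 / real q} = {(0, 0)}"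
    using assms by auto
  then show ?thesis
    using assms by (simp add: Phi_spec_def size_filter_puiseux_spectrum size_puiseux_spectrum of_nat_diff)
qed

lemma of_nat_divide_le_one_minus_iff:
  assumes "n > 0"
  shows "real k / real n \<le> 1 - 1 / real n \<longleftrightarrow> k < n"
proof -
  have "real k / real n \<le> 1 - 1 / real n \<longleftrightarrow> real k \<le> real n - 1"
    using assms by (simp add: field_simps)
  also have "\<dots> \<longleftrightarrow> k < n"
    by linarith
  finally show ?thesis .
qed

lemma Phi_puiseux_spectrum_below_one:
  assumes "coprime p q" "2 \<le> p" "2 \<le> q"
  defines "r \<equiv> 1 - 1 / (real p * real q)"
  shows "Phi_spec (puiseux_spectrum p q) r = r\<^sup>2 / 2 - 1 / 2"
proof -
  let ?S = "puiseux_spectrum p q"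
  have "a \<le> r \<longleftrightarrow> a < 1" if "a \<in># ?S" for a
  proof -
    obtain i j where a: "a = real (i + 1) / real p + real (j + 1) / real q"
      using \<open>a \<in># ?S\<close> by (auto simp: in_puiseux_spectrum_iff)
    define k where "k = (i + 1) * q + (j + 1) * p"
    have "a = real k / real (p * q)" "r = 1 - 1 / real (p * q)"
      using assms by (simp_all add: a k_def field_simps)
    moreover have "p * q > 0"
      using assms by simp
    ultimately show ?thesis
      by (simp add: of_nat_divide_le_one_minus_iff divide_less_eq_1_pos del: of_nat_mult)
  qed
  then have "filter_mset (\<lambda>a. a \<le> r) ?S = filter_mset (\<lambda>a. a < 1) ?S"
    by (rule filter_mset_cong[OF refl])
  moreover have "2 * size (filter_mset (\<lambda>a. a < 1) ?S) = size ?S"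
    using size_filter_below_center[of 1] puiseux_spectrum_reflect one_not_in_puiseux_spectrum[OF assms(1)]
    by simp
  moreover obtain m where m: "size (filter_mset (\<lambda>a. a \<le> r) ?S) = m"
    by blast
  ultimately have "real (size ?S) = 2 * real m"
    by simp
  moreover have "size ?S > 0"
    using assms by (simp add: size_puiseux_spectrum)
  ultimately show ?thesis
    unfolding Phi_spec_def m by simp
qed

lemma Phi_puiseux_spectrum_at_minimum_pos_iff:
  assumes "2 \<le> p" "2 \<le> q"
  shows "Phi_spec (puiseux_spectrum p q) (1 / real p + 1 / real q) > 0 \<longleftrightarrow>
         2 * (real p)\<^sup>2 * (real q)\<^sup>2 < (real p + real q)\<^sup>2 * ((real p - 1) * (real q - 1))"
proof -
  define x y where "x = real p" and "y = real q"
  have "x > 1" "y > 1"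
    using assms by (simp_all add: x_def y_def)
  then have "(1 / x + 1 / y)\<^sup>2 / 2 = (x + y)\<^sup>2 / (2 * x\<^sup>2 * y\<^sup>2)"
    by (simp add: field_simps power2_eq_square)
  also have "\<dots> - 1 / ((x - 1) * (y - 1)) =
             ((x + y)\<^sup>2 * ((x - 1) * (y - 1)) - 1 * (2 * x\<^sup>2 * y\<^sup>2)) / (2 * x\<^sup>2 * y\<^sup>2 * ((x - 1) * (y - 1)))"
    using \<open>x > 1\<close> \<open>y > 1\<close> by (intro diff_frac_eq) auto
  finally have "(1 / x + 1 / y)\<^sup>2 / 2 - 1 / ((x - 1) * (y - 1)) =
             ((x + y)\<^sup>2 * ((x - 1) * (y - 1)) - 2 * x\<^sup>2 * y\<^sup>2) / (2 * x\<^sup>2 * y\<^sup>2 * ((x - 1) * (y - 1)))"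
    by simp
  moreover have "2 * x\<^sup>2 * y\<^sup>2 * ((x - 1) * (y - 1)) > 0"
    using \<open>x > 1\<close> \<open>y > 1\<close> by simp
  moreover have "Phi_spec (puiseux_spectrum p q) (1 / real p + 1 / real q) =
                 (1 / x + 1 / y)\<^sup>2 / 2 - 1 / ((x - 1) * (y - 1))"
    using Phi_puiseux_spectrum_at_minimum[OF assms] by (simp add: x_def y_def)
  ultimately show ?thesis
    by (simp add: zero_less_divide_iff x_def y_def)
qed

lemma sq_sum_mult_pred_gt_two:
  fixes y :: real
  assumes "7 \<le> y"
  shows "2 * 2\<^sup>2 * y\<^sup>2 < (2 + y)\<^sup>2 * ((2 - 1) * (y - 1))"
proof -
  define t where "t = y - 7"
  have "t \<ge> 0"
    using assms by (simp add: t_def)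
  have "(2 + y)\<^sup>2 * ((2 - 1) * (y - 1)) - 2 * 2\<^sup>2 * y\<^sup>2 = t ^ 3 + 16 * t\<^sup>2 + 77 * t + 94"
    by (simp add: t_def algebra_simps power2_eq_square power3_eq_cube)
  moreover have "t ^ 3 \<ge> 0" "t\<^sup>2 \<ge> 0"
    using \<open>t \<ge> 0\<close> by simp_all
  ultimately show ?thesis
    using \<open>t \<ge> 0\<close> by linarith
qed

lemma sq_sum_mult_pred_gt:
  fixes x y :: real
  assumes "3 \<le> x" "5 \<le> y"
  shows "2 * x\<^sup>2 * y\<^sup>2 < (x + y)\<^sup>2 * ((x - 1) * (y - 1))"
proof -
  have "1 * 3 \<le> (x - 2) * (y - 2)"
    using assms by (intro mult_mono) auto
  then have less: "x * y < 2 * ((x - 1) * (y - 1))"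
    by (simp add: algebra_simps)
  have "4 * (x * y) \<le> (x + y)\<^sup>2"
    using zero_le_power2[of "x - y"] by (simp add: algebra_simps power2_eq_square)
  moreover have "x * y > 0" "(x - 1) * (y - 1) > 0"
    using assms by simp_all
  ultimately have "2 * (x * y) * (x * y) < 2 * (x * y) * (2 * ((x - 1) * (y - 1)))"
    and "4 * (x * y) * ((x - 1) * (y - 1)) \<le> (x + y)\<^sup>2 * ((x - 1) * (y - 1))"
    using less by (intro mult_strict_left_mono mult_right_mono; simp)+
  then show ?thesis
    by (simp add: power2_eq_square mult_ac)
qed

lemma Phi_puiseux_spectrum_at_minimum_pos:
  assumes "coprime p q" "2 \<le> p" "p < q"
  shows "Phi_spec (puiseux_spectrum p q) (1 / real p + 1 / real q) > 0 \<longleftrightarrow> \<not> (p = 2 \<and> q \<in> {3, 5})"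
proof -
  have pos_iff: "Phi_spec (puiseux_spectrum p q) (1 / real p + 1 / real q) > 0 \<longleftrightarrow>
         2 * (real p)\<^sup>2 * (real q)\<^sup>2 < (real p + real q)\<^sup>2 * ((real p - 1) * (real q - 1))"
    (is "_ \<longleftrightarrow> ?ineq")
    using assms by (intro Phi_puiseux_spectrum_at_minimum_pos_iff) auto
  consider "p = 2" "q \<in> {3, 5}" | "p = 2" "7 \<le> q" | "p = 3" "q = 4" | "3 \<le> p" "5 \<le> q"
  proof (cases "p = 2")
    case True
    with assms have "odd q" "2 < q"
      by auto
    then have "q \<in> {3, 5} \<or> 7 \<le> q"
      by (auto elim!: oddE)
    with True that show ?thesis
      by blast
  next
    case False
    with assms that show ?thesis
      by (cases "q = 4") (auto simp: numeral_eq_Suc)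
  qed
  then have "?ineq \<longleftrightarrow> \<not> (p = 2 \<and> q \<in> {3, 5})"
  proof cases
    case 2
    then show ?thesis
      using sq_sum_mult_pred_gt_two[of "real q"] by simp
  next
    case 4
    then show ?thesis
      using sq_sum_mult_pred_gt[of "real p" "real q"] by simp
  qed (auto simp: power2_eq_square)
  then show ?thesis
    using pos_iff by simp
qed

lemma abs_Phi_puiseux_spectrum_at_minimum_le:
  assumes "2 \<le> p" "p < q"
  shows "\<bar>Phi_spec (puiseux_spectrum p q) (1 / real p + 1 / real q)\<bar> \<le> 1 / real p"
proof -
  define x y where "x = real p" and "y = real q"
  have "x \<ge> 2" "x + 1 \<le> y"
    using assms by (simp_all add: x_def y_def)
  have "1 / y \<le> 1 / x"
    using \<open>x \<ge> 2\<close> \<open>x + 1 \<le> y\<close> by (intro divide_left_mono) auto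
  then have "(1 / x + 1 / y)\<^sup>2 / 2 \<le> (2 / x)\<^sup>2 / 2"
    using \<open>x \<ge> 2\<close> \<open>x + 1 \<le> y\<close> by (intro divide_right_mono power_mono) auto
  also have "\<dots> \<le> 1 / x"
    using \<open>x \<ge> 2\<close> by (simp add: power2_eq_square field_simps)
  finally have square: "(1 / x + 1 / y)\<^sup>2 / 2 \<le> 1 / x" .
  have "1 / ((x - 1) * (y - 1)) \<le> 1 / ((x - 1) * x)"
    using \<open>x \<ge> 2\<close> \<open>x + 1 \<le> y\<close> by (intro divide_left_mono mult_left_mono) auto
  also have "\<dots> \<le> 1 / x"
    using \<open>x \<ge> 2\<close> by (simp add: field_simps)
  finally have inverse: "1 / ((x - 1) * (y - 1)) \<le> 1 / x" .
  have "0 \<le> 1 / ((x - 1) * (y - 1))"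
    using \<open>x \<ge> 2\<close> \<open>x + 1 \<le> y\<close> by simp
  moreover have "Phi_spec (puiseux_spectrum p q) (1 / x + 1 / y) =
                 (1 / x + 1 / y)\<^sup>2 / 2 - 1 / ((x - 1) * (y - 1))"
    using Phi_puiseux_spectrum_at_minimum assms by (simp add: x_def y_def)
  ultimately show ?thesis
    using square inverse zero_le_power2[of "1 / x + 1 / y"]
    unfolding x_def[symmetric] y_def[symmetric] abs_le_iff by linarith
qed

lemma Phi_puiseux_spectrum_below_one_eq:
  assumes "coprime p q" "2 \<le> p" "2 \<le> q"
  defines "d \<equiv> 1 / (real p * real q)"
  shows "Phi_spec (puiseux_spectrum p q) (1 - d) = - (d * (2 - d)) / 2"
proof -
  have "(1 - d)\<^sup>2 / 2 - 1 / 2 = - (d * (2 - d)) / 2"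
    by (simp add: power2_eq_square field_simps)
  with Phi_puiseux_spectrum_below_one[OF assms(1-3)] show ?thesis
    by (simp add: d_def)
qed

lemma Phi_puiseux_spectrum_below_one_neg:
  assumes "coprime p q" "2 \<le> p" "2 \<le> q"
  shows "Phi_spec (puiseux_spectrum p q) (1 - 1 / (real p * real q)) < 0"
proof -
  define d where "d = 1 / (real p * real q)"
  have "1 \<le> real p * real q"
    using assms mult_mono[of 1 "real p" 1 "real q"] by simp
  then have "0 < d" "d \<le> 1"
    by (simp_all add: d_def)
  then show ?thesis
    using Phi_puiseux_spectrum_below_one_eq[OF assms] by (simp flip: d_def)
qed

lemma abs_Phi_puiseux_spectrum_below_one_le:
  assumes "coprime p q" "2 \<le> p" "2 \<le> q"
  shows "\<bar>Phi_spec (puiseux_spectrum p q) (1 - 1 / (real p * real q))\<bar> \<le> 1 / real p"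
proof -
  define d where "d = 1 / (real p * real q)"
  have "0 < d" "d \<le> 1 / real p" "1 / real p \<le> 1"
    using assms by (simp_all add: d_def frac_le)
  moreover from \<open>0 < d\<close> have "d * (2 - d) \<le> d * 2"
    by (intro mult_left_mono) auto
  moreover from calculation have "0 \<le> d * (2 - d)"
    by simp
  ultimately have "\<bar>- (d * (2 - d)) / 2\<bar> \<le> 1 / real p"
    by linarith
  then show ?thesis
    using Phi_puiseux_spectrum_below_one_eq[OF assms] by (simp flip: d_def)
qed

lemma uniformly_small_if_le_inverse:
  fixes F :: "nat \<Rightarrow> nat \<Rightarrow> real"
  assumes bound: "\<And>p q. R p q \<Longrightarrow> \<bar>F p q\<bar> \<le> 1 / real p" and "\<epsilon> > 0"
  shows "\<exists>P. \<forall>p q. R p q \<and> P \<le> p \<longrightarrow> \<bar>F p q\<bar> < \<epsilon>"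
proof -
  have "eventually (\<lambda>p. 1 / real p < \<epsilon>) sequentially"
    using order_tendstoD(2)[OF lim_inverse_n' \<open>\<epsilon> > 0\<close>] .
  then obtain P where "\<And>p. P \<le> p \<Longrightarrow> 1 / real p < \<epsilon>"
    unfolding eventually_sequentially by blast
  with bound show ?thesis
    by (meson order_le_less_trans)
qed

theorem proposition1p5:
  shows "(\<forall>p q :: nat. coprime p q \<and> 2 \<le> p \<and> p < q \<longrightarrow>
            (Phi_spec (puiseux_spectrum p q) (1 / real p + 1 / real q) > 0
               \<longleftrightarrow> \<not> (p = 2 \<and> q \<in> {3, 5})))
       \<and> (\<forall>\<epsilon> > 0. \<exists>P. \<forall>p q :: nat. coprime p q \<and> 2 \<le> p \<and> p < q \<and> P \<le> p \<longrightarrow>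
            \<bar>Phi_spec (puiseux_spectrum p q) (1 / real p + 1 / real q)\<bar> < \<epsilon>)
       \<and> (\<forall>p q :: nat. coprime p q \<and> 2 \<le> p \<and> p < q \<longrightarrow>
            Phi_spec (puiseux_spectrum p q) (1 - 1 / (real p * real q)) < 0)
       \<and> (\<forall>\<epsilon> > 0. \<exists>P. \<forall>p q :: nat. coprime p q \<and> 2 \<le> p \<and> p < q \<and> P \<le> p \<longrightarrow>
            \<bar>Phi_spec (puiseux_spectrum p q) (1 - 1 / (real p * real q))\<bar> < \<epsilon>)"
proof (intro conjI allI impI)
  fix \<epsilon> :: real
  assume "\<epsilon> > 0"
  let ?R = "\<lambda>p q. coprime p q \<and> 2 \<le> p \<and> p < q"
  show "\<exists>P. \<forall>p q :: nat. coprime p q \<and> 2 \<le> p \<and> p < q \<and> P \<le> p \<longrightarrow>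
          \<bar>Phi_spec (puiseux_spectrum p q) (1 / real p + 1 / real q)\<bar> < \<epsilon>"
    using abs_Phi_puiseux_spectrum_at_minimum_le \<open>\<epsilon> > 0\<close>
    by (intro uniformly_small_if_le_inverse[of ?R, unfolded conj_assoc]) auto
  show "\<exists>P. \<forall>p q :: nat. coprime p q \<and> 2 \<le> p \<and> p < q \<and> P \<le> p \<longrightarrow>
          \<bar>Phi_spec (puiseux_spectrum p q) (1 - 1 / (real p * real q))\<bar> < \<epsilon>"
    using abs_Phi_puiseux_spectrum_below_one_le \<open>\<epsilon> > 0\<close>
    by (intro uniformly_small_if_le_inverse[of ?R, unfolded conj_assoc]) auto
qed (simp_all add: Phi_puiseux_spectrum_at_minimum_pos Phi_puiseux_spectrum_below_one_neg)

end
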